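(* For $0<q<1$ and $w\in\mathbb{C}$, \[ \sum_{k=-\infty}^{\infty}q^{-k/2}\,\mathfrak{j}_k(2w;q)^2=\mathfrak{j}_0(2w;q)^2+\sum_{k=1}^\infty\big(q^{k/2}+q^{-k/2}\big)\mathfrak{j}_k(2w;q)^2=(-q^{1/2}w^2;q)_\infty. \] Equivalently, \[ J_0^{(2)}(2w;q)^2+\sum_{k=1}^\infty\big(q^{k/2}+q^{-k/2}\big)q^{k^2/2}J_k^{(2)}(2w;q)^2=(-w^2;q)_\infty. \]
   Context: $(a;q)_k=\prod_{j=0}^{k-1}(1-aq^j)$, $(a;q)_\infty=\lim_k(a;q)_k$, ${}_0\phi_1(;b;q,z)=\sum_{k\ge0}\frac{q^{k(k-1)}}{(q;q)_k(b;q)_k}z^k$. Jackson's second $q$-Bessel function is $J_\nu^{(2)}(x;q)=\frac{(q^{\nu+1};q)_\infty}{(q;q)_\infty}\left(\frac{x}{2}\right)^{\nu}{}_0\phi_1\!\left(;q^{\nu+1};q,-\frac{q^{\nu+1}x^2}{4}\right)$, and \[ \mathfrak{j}_\nu(x;q)=q^{\nu^2/4}J^{(2)}_\nu(q^{1/4}x;q)=q^{\nu(\nu+1)/4}\frac{(q^{\nu+1};q)_\infty}{(q;q)_\infty}\left(\frac{x}{2}\right)^{\nu}{}_0\phi_1\!\left(;q^{\nu+1};q,-q^{\nu+3/2}\frac{x^2}{4}\right). \] For negative integer orders $\nu=-n$, $\mathfrak{j}_{-n}$ is defined as the limit $\nu\to-n$ (it equals $(-1)^n\mathfrak{j}_n$).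 *)

theory Defs
  imports "HOL-Analysis.Analysis"
begin

definition qpoch :: "complex \<Rightarrow> real \<Rightarrow> nat \<Rightarrow> complex" where
  "qpoch a q n = (\<Prod>j<n. 1 - a * complex_of_real (q ^ j))"

definition qpoch_inf :: "complex \<Rightarrow> real \<Rightarrow> complex" where
  "qpoch_inf a q = lim (\<lambda>n. qpoch a q n)"

definition phi01 :: "complex \<Rightarrow> real \<Rightarrow> complex \<Rightarrow> complex" where
  "phi01 b q z = (\<Sum>k. complex_of_real (q ^ (k * (k - 1)))
                       / (qpoch (complex_of_real q) q k * qpoch b q k) * z ^ k)"

definition jackson2 :: "nat \<Rightarrow> complex \<Rightarrow> real \<Rightarrow> complex" where
  "jackson2 n x q =
     qpoch_inf (complex_of_real (q ^ (n + 1))) q / qpoch_inf (complex_of_real q) q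
     * (x / 2) ^ n
     * phi01 (complex_of_real (q ^ (n + 1))) q
             (- complex_of_real (q ^ (n + 1)) * x\<^sup>2 / 4)"

text \<open>The normalized function frak-j of integer order: for n \<ge> 0,
  q^(n^2/4) J^(2)_n(q^(1/4) x; q); for negative order -n the limiting value
  (-1)^n frak-j_n.\<close>
definition jfrak :: "int \<Rightarrow> complex \<Rightarrow> real \<Rightarrow> complex" where
  "jfrak k x q =
     (if k \<ge> 0 then complex_of_real (q powr (real_of_int k ^ 2 / 4))
                     * jackson2 (nat k) (complex_of_real (q powr (1/4)) * x) q
      else (-1) ^ nat (-k) * complex_of_real (q powr (real_of_int (-k) ^ 2 / 4))
                     * jackson2 (nat (-k)) (complex_of_real (q powr (1/4)) * x) q)"

end

theory Submission
  imports Defs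
begin

text \<open>Write \<open>J\<^sub>n(2v) = v\<^sup>n \<Sum>\<^sub>m c\<^sub>n\<^sub>,\<^sub>m v\<^sup>2\<^sup>m\<close>. Then \<open>\<Sum>\<^sub>k q\<^bsup>k(k-1)/2\<^esup> J\<^sub>|\<^sub>k\<^sub>|(2v)\<^sup>2\<close>
  is an absolutely convergent triple series over \<open>(k, m, m')\<close>. Grouped by the total degree
  \<open>N = |k| + m + m'\<close>, the coefficient of \<open>v\<^sup>2\<^sup>N\<close> becomes a finite double sum over \<open>a, b \<le> N\<close>
  that factorises: its inner sum is Cauchy's \<open>q\<close>-binomial theorem at \<open>z = -q\<^bsup>1-a\<^esup>\<close>, the product
  \<open>\<Prod>\<^sub>j\<^sub><\<^sub>N (1 - q\<^bsup>j+1-a\<^esup>)\<close>, which vanishes unless \<open>a = 0\<close>. Hence that coefficient is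
  \<open>q\<^bsup>N(N-1)/2\<^esup>/(q;q)\<^sub>N\<close>, and Euler's identity sums these to \<open>(-v\<^sup>2;q)\<^sub>\<infinity>\<close>. The stated forms
  follow by substituting \<open>v = q\<^bsup>1/4\<^esup> w\<close> and pairing the terms \<open>k\<close> and \<open>-k\<close>.\<close>

section \<open>Triangular exponents\<close>

lemma Suc_choose_two: "Suc k choose 2 = (k choose 2) + k"
  by (cases k) (auto simp: choose_two algebra_simps)

lemma double_choose_two: "2 * int (n choose 2) = int n * (int n - 1)"
  by (induction n) (auto simp: Suc_choose_two algebra_simps)

lemma mult_le_Suc_choose_two_add: "a * b \<le> (Suc a choose 2) + (Suc b choose 2)"
proof -
  have "2 * int (a * b) \<le> 2 * int ((Suc a choose 2) + (Suc b choose 2))"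
    using double_choose_two[of "Suc a"] double_choose_two[of "Suc b"]
      zero_le_power2[of "int a - int b"]
    by (simp add: power2_eq_square algebra_simps)
  then have "int (a * b) \<le> int ((Suc a choose 2) + (Suc b choose 2))"
    by (rule mult_left_le_imp_le) simp
  then show ?thesis by (simp only: of_nat_le_iff)
qed

lemma choose_two_exponent_nonneg:
  "(n choose 2) + (m * m + m * n) + (m' * m' + m' * n) + m * m'
    = (n + m + m' choose 2) + ((Suc m choose 2) + (Suc m' choose 2))"
proof -
  have "2 * int ((n choose 2) + (m * m + m * n) + (m' * m' + m' * n) + m * m')
      = 2 * int ((n + m + m' choose 2) + ((Suc m choose 2) + (Suc m' choose 2)))"
    using double_choose_two[of n] double_choose_two[of "n + m + m'"]
      double_choose_two[of "Suc m"] double_choose_two[of "Suc m'"]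
    by (simp add: algebra_simps)
  then show ?thesis
    by (metis mult_cancel_left of_nat_eq_iff zero_neq_numeral)
qed

lemma choose_two_exponent_neg:
  "(Suc n choose 2) + (m * m + m * n) + (m' * m' + m' * n) + (m + n) * (m' + n)
    = (n + m + m' choose 2) + ((Suc (m + n) choose 2) + (Suc (m' + n) choose 2))"
proof -
  have "2 * int ((Suc n choose 2) + (m * m + m * n) + (m' * m' + m' * n) + (m + n) * (m' + n))
      = 2 * int ((n + m + m' choose 2) + ((Suc (m + n) choose 2) + (Suc (m' + n) choose 2)))"
    using double_choose_two[of "Suc n"] double_choose_two[of "n + m + m'"]
      double_choose_two[of "Suc (m + n)"] double_choose_two[of "Suc (m' + n)"]
    by (simp add: algebra_simps)
  then show ?thesis
    by (metis mult_cancel_left of_nat_eq_iff zero_neq_numeral)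
qed

section \<open>Rearranging absolutely convergent series\<close>

lemma has_sum_product_of_summable_norm:
  fixes f g :: "nat \<Rightarrow> 'a::{real_normed_field, banach}"
  assumes f: "summable (\<lambda>n. norm (f n))" and g: "summable (\<lambda>n. norm (g n))"
  shows "((\<lambda>(m, m'). f m * g m') has_sum (suminf f * suminf g)) UNIV"
proof -
  have has_sum: "(h has_sum suminf h) UNIV" if "summable (\<lambda>n. norm (h n))" for h :: "nat \<Rightarrow> 'a"
    using that summable_sums[OF summable_norm_cancel[OF that]] by (rule norm_summable_imp_has_sum)
  have norm_has_sum: "((\<lambda>n. norm (h n)) has_sum (\<Sum>n. norm (h n))) UNIV"
    if "summable (\<lambda>n. norm (h n))" for h :: "nat \<Rightarrow> 'a"
    using that summable_sums[OF that] by (intro norm_summable_imp_has_sum) auto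
  have "(\<lambda>(m, m'). norm (f m) * norm (g m')) summable_on UNIV \<times> UNIV"
  proof (rule summable_on_SigmaI)
    show "((\<lambda>y. case (m, y) of (m, m') \<Rightarrow> norm (f m) * norm (g m'))
        has_sum norm (f m) * (\<Sum>n. norm (g n))) UNIV" for m
      using has_sum_cmult_right[OF norm_has_sum[OF g]] by simp
    show "(\<lambda>m. norm (f m) * (\<Sum>n. norm (g n))) summable_on UNIV"
      using has_sum_cmult_left[OF norm_has_sum[OF f]] by (auto simp: summable_on_def)
  qed auto
  then have "(\<lambda>x. norm ((\<lambda>(m, m'). f m * g m') x)) summable_on UNIV \<times> UNIV"
    by (rule summable_on_cong[THEN iffD1, rotated]) (auto simp: norm_mult)
  then have summable: "(\<lambda>(m, m'). f m * g m') summable_on UNIV \<times> UNIV"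
    by (rule abs_summable_summable)
  have "((\<lambda>(m, m'). f m * g m') has_sum (suminf f * suminf g)) (UNIV \<times> UNIV)"
    by (rule has_sum_SigmaI[where g = "\<lambda>m. f m * suminf g"])
      (use has_sum_cmult_right[OF has_sum[OF g]] has_sum_cmult_left[OF has_sum[OF f]] summable in auto)
  then show ?thesis
    by simp
qed

lemma has_sum_int_imp_sums_symmetric:
  fixes f :: "int \<Rightarrow> 'a::banach"
  assumes "(f has_sum S) UNIV"
  shows "(\<lambda>n. f (int (Suc n)) + f (- int (Suc n))) sums (S - f 0)"
proof -
  define A where "A = UNIV - {0::int}"
  have sum_A: "(f has_sum (S - f 0)) A"
  proof -
    have "(f has_sum infsum f A) A"
      using summable_on_subset_banach[OF has_sum_imp_summable[OF assms]] by (intro has_sum_infsum) simp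
    then have "(f has_sum (f 0 + infsum f A)) UNIV"
      using has_sum_insert[of 0 A f] by (simp add: A_def insert_absorb)
    then show ?thesis
      using \<open>(f has_sum infsum f A) A\<close> has_sum_unique[OF assms] by fastforce
  qed
  define g where "g = (\<lambda>(n::nat, b::bool). if b then int (Suc n) else - int (Suc n))"
  define g' where "g' = (\<lambda>x::int. (nat \<bar>x\<bar> - 1, x > 0))"
  have "((f \<circ> g) has_sum (S - f 0)) (UNIV \<times> UNIV)"
    using sum_A
    by (intro has_sum_reindex_bij_witness[where i = g' and j = g, THEN iffD2])
      (auto simp: g_def g'_def A_def split: if_splits)
  then have "((\<lambda>n. f (int (Suc n)) + f (- int (Suc n))) has_sum (S - f 0)) UNIV"
    by (rule has_sum_SigmaD) (auto intro!: has_sum_finiteI simp: g_def UNIV_bool)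
  then show ?thesis
    by (rule has_sum_imp_sums)
qed

section \<open>\<open>q\<close>-factorials and Cauchy's \<open>q\<close>-binomial theorem\<close>

definition qfact :: "real \<Rightarrow> nat \<Rightarrow> real" where
  "qfact q n = (\<Prod>j<n. 1 - q ^ Suc j)"

definition qbinom :: "real \<Rightarrow> nat \<Rightarrow> nat \<Rightarrow> real" where
  "qbinom q n k = (if k \<le> n then qfact q n / (qfact q k * qfact q (n - k)) else 0)"

lemma qfact_0 [simp]: "qfact q 0 = 1"
  by (simp add: qfact_def)

lemma qfact_Suc: "qfact q (Suc n) = qfact q n * (1 - q ^ Suc n)"
  by (simp add: qfact_def)

lemma qfact_add: "qfact q (n + m) = qfact q n * (\<Prod>j<m. 1 - q ^ (n + 1 + j))"
  by (induction m) (auto simp: qfact_Suc)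

lemma qbinom_greater: "n < k \<Longrightarrow> qbinom q n k = 0"
  by (simp add: qbinom_def)

locale qbase =
  fixes q :: real
  assumes q_pos: "0 < q" and q_less_1: "q < 1"
begin

lemma power_Suc_le: "q ^ Suc n \<le> q"
  using q_pos q_less_1 by (metis less_eq_real_def power_Suc_le_self)

lemma power_Suc_less_1: "q ^ Suc n < 1"
  using power_Suc_le q_less_1 by (rule le_less_trans)

lemma qfact_pos: "qfact q n > 0"
proof (induction n)
  case (Suc n)
  then show ?case using power_Suc_less_1[of n] by (simp only: qfact_Suc) simp
qed simp

lemma qfact_ge: "qfact q n \<ge> (1 - q) ^ n"
proof (induction n)
  case (Suc n)
  have "(1 - q) ^ n * (1 - q) \<le> qfact q n * (1 - q ^ Suc n)"
    using Suc q_less_1 power_Suc_le[of n] less_imp_le[OF qfact_pos[of n]] by (intro mult_mono) auto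
  then show ?case by (simp add: qfact_Suc mult.commute)
qed simp

lemma qfact_antimono: "qfact q (m + d) \<le> qfact q m"
proof (induction d)
  case (Suc d)
  have "qfact q (m + Suc d) \<le> qfact q (m + d)"
    using qfact_pos[of "m + d"] q_pos by (simp add: qfact_Suc mult_left_le)
  then show ?case using Suc by simp
qed simp

lemma qbinom_0 [simp]: "qbinom q n 0 = 1"
  using qfact_pos[of n] by (simp add: qbinom_def)

lemma qbinom_Suc_Suc: "qbinom q (Suc n) (Suc k) = q ^ Suc k * qbinom q n (Suc k) + qbinom q n k"
proof (cases "k < n")
  case True
  then obtain d where n: "n = k + Suc d"
    by (metis add_Suc_right less_imp_Suc_add)
  have diffs: "Suc n - Suc k = Suc d" "n - Suc k = d" "n - k = Suc d"
    using n by auto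
  have pos: "qfact q k > 0" "qfact q d > 0" "1 - q ^ Suc k > 0" "1 - q ^ Suc d > 0"
    using qfact_pos power_Suc_less_1 by auto
  have split: "1 - q ^ Suc n = q ^ Suc k * (1 - q ^ Suc d) + (1 - q ^ Suc k)"
    unfolding n by (simp add: power_add algebra_simps)
  have divide_split: "N * (x * b + a) / (A * a * (D * b)) = x * (N / (A * a * D)) + N / (A * (D * b))"
    if "A > 0" "D > 0" "a > 0" "b > 0" for A D a b N x :: real
    using that by (simp add: field_simps)
  have "qbinom q (Suc n) (Suc k) = qfact q n * (q ^ Suc k * (1 - q ^ Suc d) + (1 - q ^ Suc k))
      / (qfact q k * (1 - q ^ Suc k) * (qfact q d * (1 - q ^ Suc d)))"
    using True by (simp only: qbinom_def diffs qfact_Suc split[symmetric] if_True Suc_le_mono less_imp_le)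
  also have "\<dots> = q ^ Suc k * (qfact q n / (qfact q k * (1 - q ^ Suc k) * qfact q d))
      + qfact q n / (qfact q k * (qfact q d * (1 - q ^ Suc d)))"
    by (rule divide_split[OF pos])
  also have "\<dots> = q ^ Suc k * qbinom q n (Suc k) + qbinom q n k"
    using True by (simp only: qbinom_def diffs qfact_Suc if_True Suc_leI less_imp_le)
  finally show ?thesis .
next
  case False
  then show ?thesis
    using qfact_pos[of n] qfact_pos[of "Suc n"] by (cases "k = n") (auto simp: qbinom_def)
qed

lemma qbinomial_theorem:
  fixes z :: "'a::real_field"
  shows "(\<Prod>j<n. 1 + z * of_real (q ^ j)) = (\<Sum>k\<le>n. of_real (qbinom q n k * q ^ (k choose 2)) * z ^ k)"
proof (induction n arbitrary: z)
  case (Suc n)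
  have "(\<Prod>j<Suc n. 1 + z * of_real (q ^ j)) = (1 + z) * (\<Prod>j<n. 1 + (z * of_real q) * of_real (q ^ j))"
    by (subst prod.lessThan_Suc_shift) (simp add: mult.assoc)
  also have "\<dots> = (1 + z) * (\<Sum>k\<le>n. of_real (qbinom q n k * q ^ (k choose 2)) * (z * of_real q) ^ k)"
    by (simp only: Suc)
  also have "\<dots> = (\<Sum>k\<le>n. of_real (qbinom q n k * q ^ (k choose 2) * q ^ k) * z ^ k)
      + (\<Sum>k\<le>n. of_real (qbinom q n k * q ^ (Suc k choose 2)) * z ^ Suc k)"
    by (simp add: distrib_right sum_distrib_left Suc_choose_two power_add power_mult_distrib
        sum.distrib[symmetric] algebra_simps)
  also have "(\<Sum>k\<le>n. of_real (qbinom q n k * q ^ (k choose 2) * q ^ k) * z ^ k)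
      = (\<Sum>k\<le>Suc n. of_real (qbinom q n k * q ^ (k choose 2) * q ^ k) * z ^ k)"
    by (simp add: sum.atMost_Suc qbinom_greater)
  also have "\<dots> = 1 + (\<Sum>k\<le>n. of_real (qbinom q n (Suc k) * q ^ (Suc k choose 2) * q ^ Suc k) * z ^ Suc k)"
    by (subst sum.atMost_Suc_shift) (simp add: choose_two)
  finally have "(\<Prod>j<Suc n. 1 + z * of_real (q ^ j))
      = 1 + (\<Sum>k\<le>n. of_real (qbinom q (Suc n) (Suc k) * q ^ (Suc k choose 2)) * z ^ Suc k)"
    by (simp add: qbinom_Suc_Suc sum.distrib[symmetric] algebra_simps)
  also have "\<dots> = (\<Sum>k\<le>Suc n. of_real (qbinom q (Suc n) k * q ^ (k choose 2)) * z ^ k)"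
    by (subst sum.atMost_Suc_shift) (simp add: choose_two)
  finally show ?case .
qed (simp add: choose_two)

lemma qbinom_alternating_sum:
  assumes "a \<le> N"
  shows "(\<Sum>b\<le>N. (-1) ^ b * qbinom q N b * q ^ (Suc b choose 2) / q ^ (a * b))
    = (if a = 0 then qfact q N else 0)"
proof -
  have "(\<Sum>b\<le>N. (-1) ^ b * qbinom q N b * q ^ (Suc b choose 2) / q ^ (a * b))
      = (\<Sum>b\<le>N. qbinom q N b * q ^ (b choose 2) * (- (q / q ^ a)) ^ b)"
  proof (rule sum.cong)
    fix b
    have "(- (q / q ^ a)) ^ b = (-1) ^ b * q ^ b / q ^ (a * b)"
      by (subst power_minus) (simp add: power_divide power_mult)
    then show "(-1) ^ b * qbinom q N b * q ^ (Suc b choose 2) / q ^ (a * b)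
        = qbinom q N b * q ^ (b choose 2) * (- (q / q ^ a)) ^ b"
      by (simp add: Suc_choose_two power_add)
  qed simp
  also have "\<dots> = (\<Prod>j<N. 1 + (- (q / q ^ a)) * q ^ j)"
    using qbinomial_theorem[where n = N and z = "- (q / q ^ a)"] by simp
  also have "\<dots> = (if a = 0 then qfact q N else 0)"
  proof (cases "a = 0")
    case True
    then show ?thesis
      by (simp add: qfact_def)
  next
    case False
    then have "1 + (- (q / q ^ a)) * q ^ (a - 1) = 0"
      using q_pos by (cases a) (simp_all add: field_simps)
    then have "(\<Prod>j<N. 1 + (- (q / q ^ a)) * q ^ j) = 0"
      using False assms by (intro prod_zero) (auto intro!: bexI[of _ "a - 1"])
    with False show ?thesis
      by simp
  qed
  finally show ?thesis .
qed

end

section \<open>Euler's identity\<close>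

definition qfact_inf :: "real \<Rightarrow> real" where
  "qfact_inf q = (\<Prod>j. 1 - q ^ Suc j)"

context qbase
begin

lemma summable_qpower_choose_two:
  assumes "0 \<le> c"
  shows "summable (\<lambda>m. q ^ (m choose 2) * c ^ m)"
proof -
  have "(\<lambda>n. q ^ n * c) \<longlonglongrightarrow> 0 * c"
    using q_pos q_less_1 by (intro tendsto_intros) auto
  then have "eventually (\<lambda>n. q ^ n * c < 1/2) sequentially"
    by (intro order_tendstoD) auto
  then obtain N where N: "\<And>n. n \<ge> N \<Longrightarrow> q ^ n * c < 1/2"
    by (auto simp: eventually_sequentially)
  show ?thesis
  proof (rule summable_ratio_test[of "1/2" N])
    fix n assume "n \<ge> N"
    have "norm (q ^ (Suc n choose 2) * c ^ Suc n) = (q ^ n * c) * (q ^ (n choose 2) * c ^ n)"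
      using q_pos assms by (simp add: Suc_choose_two power_add algebra_simps)
    also have "\<dots> \<le> 1/2 * (q ^ (n choose 2) * c ^ n)"
      using N[OF \<open>n \<ge> N\<close>] q_pos assms by (intro mult_right_mono) auto
    finally show "norm (q ^ (Suc n choose 2) * c ^ Suc n) \<le> 1/2 * norm (q ^ (n choose 2) * c ^ n)"
      using q_pos assms by simp
  qed simp
qed

lemma
  shows qfact_LIMSEQ: "qfact q \<longlonglongrightarrow> qfact_inf q"
    and qfact_inf_nonzero: "qfact_inf q \<noteq> 0"
proof -
  have "summable (\<lambda>i. norm ((1 - q ^ Suc i) - 1))"
    using q_pos q_less_1 by (simp add: summable_geometric summable_mult)
  then have conv: "convergent_prod (\<lambda>j. 1 - q ^ Suc j)"
    by (intro abs_convergent_prod_imp_convergent_prod summable_imp_abs_convergent_prod)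
  have "(\<lambda>n. qfact q (Suc n)) \<longlonglongrightarrow> qfact_inf q"
    using convergent_prod_LIMSEQ[OF conv] unfolding qfact_inf_def qfact_def
    by (simp add: lessThan_Suc_atMost)
  then show "qfact q \<longlonglongrightarrow> qfact_inf q"
    by (simp add: filterlim_sequentially_Suc)
  show "qfact_inf q \<noteq> 0"
    unfolding qfact_inf_def using power_Suc_less_1
    by (intro prodinf_nonzero[OF conv]) (metis less_irrefl right_minus_eq)
qed

lemma qbinom_LIMSEQ: "(\<lambda>n. qbinom q n k) \<longlonglongrightarrow> 1 / qfact q k"
proof (rule LIMSEQ_offset[where k = k])
  have "(\<lambda>n. qfact q (n + k) / (qfact q k * qfact q n)) \<longlonglongrightarrow> qfact_inf q / (qfact q k * qfact_inf q)"
    using qfact_LIMSEQ qfact_inf_nonzero qfact_pos[of k]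
    by (intro tendsto_intros LIMSEQ_ignore_initial_segment) auto
  then show "(\<lambda>n. qbinom q (n + k) k) \<longlonglongrightarrow> 1 / qfact q k"
    using qfact_inf_nonzero by (simp add: qbinom_def)
qed

lemma qbinom_bounds: "0 \<le> qbinom q n k \<and> qbinom q n k \<le> 1 / (1 - q) ^ k"
proof (cases "k \<le> n")
  case True
  then obtain d where n: "n = d + k"
    by (metis le_add_diff_inverse2)
  have pos: "qfact q d > 0" "qfact q k > 0" "qfact q n > 0"
    using qfact_pos by auto
  have "qfact q n \<le> qfact q d"
    unfolding n by (rule qfact_antimono)
  then have "qbinom q n k \<le> 1 / qfact q k"
    using pos True n by (simp add: qbinom_def field_simps)
  also have "\<dots> \<le> 1 / (1 - q) ^ k"
    using qfact_ge[of k] q_less_1 pos by (intro divide_left_mono) auto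
  finally show ?thesis
    using pos True qfact_pos[of "n - k"] by (simp add: qbinom_def)
next
  case False
  then show ?thesis
    using q_less_1 by (simp add: qbinom_def)
qed

text \<open>The limit \<open>n \<rightarrow> \<infinity>\<close> of the \<open>q\<close>-binomial theorem, justified by Tannery's theorem.\<close>
lemma qpoch_inf_minus_sums:
  "(\<lambda>n. of_real (q ^ (n choose 2) / qfact q n) * y ^ n) sums qpoch_inf (- y) q"
proof -
  define a where "a k n = of_real (qbinom q n k * q ^ (k choose 2)) * y ^ k" for k n
  define M where "M k = q ^ (k choose 2) * (norm y / (1 - q)) ^ k" for k
  have lim: "(\<lambda>n. a k n) \<longlonglongrightarrow> of_real (q ^ (k choose 2) / qfact q k) * y ^ k" for k
    using qbinom_LIMSEQ[of k] unfolding a_def by (auto intro!: tendsto_eq_intros)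
  have "norm (a k n) \<le> M k" for k n
  proof -
    have "norm (a k n) = qbinom q n k * q ^ (k choose 2) * norm y ^ k"
      using qbinom_bounds[of n k] q_pos by (simp add: a_def norm_mult norm_power)
    also have "\<dots> \<le> 1 / (1 - q) ^ k * q ^ (k choose 2) * norm y ^ k"
      using qbinom_bounds[of n k] q_pos by (intro mult_right_mono) auto
    finally show ?thesis
      by (simp add: M_def power_divide)
  qed
  then have bound: "eventually (\<lambda>(k,n). norm (a k n) \<le> M k) (at_top \<times>\<^sub>F sequentially)"
    by (intro always_eventually) (auto simp: case_prod_beta)
  have "summable M"
    unfolding M_def using q_less_1 by (intro summable_qpower_choose_two) auto
  from tannerys_theorem[OF lim bound this]
  have lim_sum: "(\<lambda>n. \<Sum>k. a k n) \<longlonglongrightarrow> (\<Sum>k. of_real (q ^ (k choose 2) / qfact q k) * y ^ k)"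
    and summable: "summable (\<lambda>k. norm (of_real (q ^ (k choose 2) / qfact q k) * y ^ k :: complex))"
    by auto
  have "(\<Sum>k. a k n) = qpoch (- y) q n" for n
  proof -
    have "(\<Sum>k. a k n) = (\<Sum>k\<le>n. a k n)"
      by (rule suminf_finite) (auto simp: a_def qbinom_def)
    then show ?thesis
      using qbinomial_theorem[where n = n and z = y] by (simp add: qpoch_def a_def)
  qed
  with lim_sum have "qpoch_inf (- y) q = (\<Sum>k. of_real (q ^ (k choose 2) / qfact q k) * y ^ k)"
    unfolding qpoch_inf_def by (intro limI) simp
  then show ?thesis
    using summable_sums[OF summable_norm_cancel[OF summable]] by simp
qed

end

section \<open>Jackson's function as a power series\<close>

definition jackson_coeff :: "real \<Rightarrow> complex \<Rightarrow> nat \<Rightarrow> nat \<Rightarrow> complex" where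
  "jackson_coeff q v n m =
     of_real ((-1) ^ m * q ^ (m * m + m * n) / (qfact q m * qfact q (n + m))) * v ^ (2 * m)"

context qbase
begin

lemma qpoch_q_power: "qpoch (of_real (q ^ (n + 1))) q m = of_real (qfact q (n + m) / qfact q n)"
proof -
  have "qpoch (of_real (q ^ (n + 1))) q m = of_real (\<Prod>j<m. 1 - q ^ (n + 1 + j))"
    unfolding qpoch_def by (simp add: power_add mult.assoc)
  then show ?thesis
    using qfact_pos[of n] by (simp add: qfact_add)
qed

lemma qpoch_inf_q_power: "qpoch_inf (of_real (q ^ (n + 1))) q = of_real (qfact_inf q / qfact q n)"
proof -
  have "(\<lambda>m. qfact q (m + n)) \<longlonglongrightarrow> qfact_inf q"
    using qfact_LIMSEQ by (rule LIMSEQ_ignore_initial_segment)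
  then have "(\<lambda>m. of_real (qfact q (m + n) / qfact q n) :: complex) \<longlonglongrightarrow> of_real (qfact_inf q / qfact q n)"
    using qfact_pos[of n] by (intro tendsto_intros) auto
  then show ?thesis
    unfolding qpoch_inf_def qpoch_q_power by (intro limI) (simp add: add.commute)
qed

lemma qpoch_q: "qpoch (of_real q) q m = of_real (qfact q m)"
  using qpoch_q_power[of 0 m] by simp

lemma qpoch_inf_q: "qpoch_inf (of_real q) q = of_real (qfact_inf q)"
  using qpoch_inf_q_power[of 0] by simp

lemma norm_jackson_coeff_le:
  "norm (jackson_coeff q v n m) \<le> 1 / (1 - q) ^ n * (q ^ (m choose 2) * ((norm v)\<^sup>2 / (1 - q)\<^sup>2) ^ m)"
proof -
  have pos: "qfact q m > 0" "qfact q (n + m) > 0" "(1 - q) ^ m > 0" "(1 - q) ^ (n + m) > 0"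
    using qfact_pos q_less_1 by auto
  have "m choose 2 \<le> m * (m - 1)"
    unfolding choose_two by (rule div_le_dividend)
  also have "\<dots> \<le> m * m + m * n"
    by (metis diff_le_self mult_le_mono2 trans_le_add1)
  finally have exponent_le: "m choose 2 \<le> m * m + m * n" .
  have regroup: "t / (a ^ m * a ^ (n + m)) * x = 1 / a ^ n * (t * (x / (a ^ m * a ^ m)))"
    if "a > 0" for a t x :: real
    using that by (simp add: power_add field_simps)
  have "norm (jackson_coeff q v n m)
      = q ^ (m * m + m * n) / (qfact q m * qfact q (n + m)) * norm v ^ (2 * m)"
    unfolding jackson_coeff_def norm_mult norm_of_real norm_power
    using pos q_pos by (simp add: abs_mult power_abs)
  also have "\<dots> \<le> q ^ (m choose 2) / ((1 - q) ^ m * (1 - q) ^ (n + m)) * norm v ^ (2 * m)"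
  proof (intro mult_right_mono frac_le)
    show "q ^ (m * m + m * n) \<le> q ^ (m choose 2)"
      using q_pos q_less_1 exponent_le by (intro power_decreasing) auto
    show "(1 - q) ^ m * (1 - q) ^ (n + m) \<le> qfact q m * qfact q (n + m)"
      using qfact_ge pos by (intro mult_mono) (auto intro: less_imp_le)
  qed (use pos q_pos in auto)
  also have "\<dots> = 1 / (1 - q) ^ n * (q ^ (m choose 2) * (norm v ^ (2 * m) / ((1 - q) ^ m * (1 - q) ^ m)))"
    using q_less_1 by (intro regroup) simp
  also have "norm v ^ (2 * m) / ((1 - q) ^ m * (1 - q) ^ m) = ((norm v)\<^sup>2 / (1 - q)\<^sup>2) ^ m"
    by (simp add: power_divide power_mult[symmetric] mult_2 power_add)
  finally show ?thesis .
qed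

lemma summable_norm_jackson_coeff: "summable (\<lambda>m. norm (jackson_coeff q v n m))"
proof (rule summable_comparison_test'[where N = 0])
  show "summable (\<lambda>m. 1 / (1 - q) ^ n * (q ^ (m choose 2) * ((norm v)\<^sup>2 / (1 - q)\<^sup>2) ^ m))"
    by (intro summable_mult summable_qpower_choose_two) simp
qed (use norm_jackson_coeff_le in simp)

lemma jackson2_series_term:
  "of_real (q ^ (m * (m - 1))) / (qpoch (of_real q) q m * qpoch (of_real (q ^ (n + 1))) q m)
    * (- of_real (q ^ (n + 1)) * (2 * v)\<^sup>2 / 4) ^ m = of_real (qfact q n) * jackson_coeff q v n m"
proof -
  have exponents: "q ^ (m * (m - 1)) * q ^ ((n + 1) * m) = q ^ (m * m + m * n)"
    unfolding power_add[symmetric] by (cases m) (simp_all add: algebra_simps)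
  have "- of_real (q ^ (n + 1)) * (2 * v)\<^sup>2 / 4 = of_real (- (q ^ (n + 1))) * v\<^sup>2"
    by (simp add: power_mult_distrib)
  then have "(- of_real (q ^ (n + 1)) * (2 * v)\<^sup>2 / 4) ^ m
      = of_real ((- (q ^ (n + 1))) ^ m) * (v\<^sup>2) ^ m"
    by (simp only: power_mult_distrib of_real_power)
  also have "\<dots> = of_real ((-1) ^ m * q ^ ((n + 1) * m)) * v ^ (2 * m)"
    by (simp only: power_minus[of "q ^ (n + 1)"] power_mult)
  finally have argument_power: "(- of_real (q ^ (n + 1)) * (2 * v)\<^sup>2 / 4) ^ m
      = of_real ((-1) ^ m * q ^ ((n + 1) * m)) * v ^ (2 * m)" .
  have "q ^ (m * (m - 1)) / (qfact q m * (qfact q (n + m) / qfact q n)) * ((-1) ^ m * q ^ ((n + 1) * m))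
      = qfact q n * ((-1) ^ m * (q ^ (m * (m - 1)) * q ^ ((n + 1) * m)) / (qfact q m * qfact q (n + m)))"
    using qfact_pos[of n] by (simp add: field_simps)
  also have "\<dots> = qfact q n * ((-1) ^ m * q ^ (m * m + m * n) / (qfact q m * qfact q (n + m)))"
    by (simp only: exponents)
  finally have coefficient: "q ^ (m * (m - 1)) / (qfact q m * (qfact q (n + m) / qfact q n))
      * ((-1) ^ m * q ^ ((n + 1) * m))
    = qfact q n * ((-1) ^ m * q ^ (m * m + m * n) / (qfact q m * qfact q (n + m)))" .
  have "of_real (q ^ (m * (m - 1))) / (qpoch (of_real q) q m * qpoch (of_real (q ^ (n + 1))) q m)
      * (- of_real (q ^ (n + 1)) * (2 * v)\<^sup>2 / 4) ^ m
    = of_real (q ^ (m * (m - 1)) / (qfact q m * (qfact q (n + m) / qfact q n))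
        * ((-1) ^ m * q ^ ((n + 1) * m))) * v ^ (2 * m)"
    unfolding qpoch_q qpoch_q_power argument_power of_real_mult of_real_divide
    by (simp only: mult.assoc)
  also have "\<dots> = of_real (qfact q n * ((-1) ^ m * q ^ (m * m + m * n) / (qfact q m * qfact q (n + m))))
      * v ^ (2 * m)"
    by (simp only: coefficient)
  also have "\<dots> = of_real (qfact q n) * jackson_coeff q v n m"
    by (simp only: jackson_coeff_def of_real_mult mult.assoc)
  finally show ?thesis .
qed

lemma jackson2_double_series: "jackson2 n (2 * v) q = v ^ n * (\<Sum>m. jackson_coeff q v n m)"
proof -
  have "phi01 (of_real (q ^ (n + 1))) q (- of_real (q ^ (n + 1)) * (2 * v)\<^sup>2 / 4)
      = of_real (qfact q n) * (\<Sum>m. jackson_coeff q v n m)"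
    unfolding phi01_def jackson2_series_term
    using summable_norm_cancel[OF summable_norm_jackson_coeff] by (rule suminf_mult)
  then show ?thesis
    unfolding jackson2_def qpoch_inf_q_power qpoch_inf_q
    using qfact_inf_nonzero qfact_pos[of n] by (simp add: field_simps)
qed

end

section \<open>Regrouping the sum of squares by degree\<close>

definition degree_triples :: "(nat \<times> nat \<times> nat) set" where
  "degree_triples = Sigma UNIV (\<lambda>N. {..N} \<times> {..N})"

text \<open>The term \<open>(k, m, m')\<close> of the triple series has degree \<open>N = |k| + m + m'\<close> in \<open>v\<^sup>2\<close>.\<close>
definition to_degree :: "int \<times> nat \<times> nat \<Rightarrow> nat \<times> nat \<times> nat" where
  "to_degree = (\<lambda>(k, m, m'). if k \<ge> 0 then (m + m' + nat k, m, m')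
     else (m + m' + nat (- k), m + nat (- k), m' + nat (- k)))"

definition from_degree :: "nat \<times> nat \<times> nat \<Rightarrow> int \<times> nat \<times> nat" where
  "from_degree = (\<lambda>(N, a, b). if int N - int a - int b \<ge> 0 then (int N - int a - int b, a, b)
     else (int N - int a - int b, N - b, N - a))"

lemma to_degree_in_degree_triples: "to_degree x \<in> degree_triples"
  by (cases x) (auto simp: to_degree_def degree_triples_def)

lemma from_degree_to_degree: "from_degree (to_degree x) = x"
  by (cases x) (auto simp: to_degree_def from_degree_def)

lemma to_degree_from_degree: "y \<in> degree_triples \<Longrightarrow> to_degree (from_degree y) = y"
  by (cases y) (auto simp: to_degree_def from_degree_def degree_triples_def)

definition int_choose_two :: "int \<Rightarrow> nat" where
  "int_choose_two k = nat (k * (k - 1) div 2)"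

lemma int_choose_two_of_nat: "int_choose_two (int n) = n choose 2"
  using double_choose_two[of n] unfolding int_choose_two_def by simp

lemma int_choose_two_minus: "int_choose_two (- int n) = Suc n choose 2"
  using double_choose_two[of "Suc n"] unfolding int_choose_two_def by (simp add: algebra_simps)

lemma real_int_choose_two: "real (int_choose_two k) = (real_of_int k ^ 2 - real_of_int k) / 2"
proof (cases "k \<ge> 0")
  case True
  then obtain n where "k = int n"
    by (metis nonneg_int_cases)
  then show ?thesis
    using arg_cong[OF double_choose_two[of n], of real_of_int]
    by (simp add: int_choose_two_of_nat algebra_simps power2_eq_square)
next
  case False
  then obtain n where "k = - int n"
    by (metis nonpos_int_cases linorder_not_le less_imp_le)
  then show ?thesis
    using arg_cong[OF double_choose_two[of "Suc n"], of real_of_int]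
    by (simp add: int_choose_two_minus algebra_simps power2_eq_square)
qed

definition fibre_coeff :: "real \<Rightarrow> nat \<Rightarrow> nat \<Rightarrow> nat \<Rightarrow> real" where
  "fibre_coeff q N a b = (-1) ^ (a + b) * q ^ ((Suc a choose 2) + (Suc b choose 2))
     / (q ^ (a * b) * (qfact q a * qfact q (N - a) * qfact q b * qfact q (N - b)))"

definition degree_term :: "real \<Rightarrow> complex \<Rightarrow> nat \<times> nat \<times> nat \<Rightarrow> complex" where
  "degree_term q v = (\<lambda>(N, a, b). of_real (q ^ (N choose 2) * fibre_coeff q N a b) * v ^ (2 * N))"

definition product_term :: "real \<Rightarrow> complex \<Rightarrow> int \<times> nat \<times> nat \<Rightarrow> complex" where
  "product_term q v = (\<lambda>(k, m, m'). of_real (q ^ int_choose_two k) * v ^ (2 * nat \<bar>k\<bar>)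
     * (jackson_coeff q v (nat \<bar>k\<bar>) m * jackson_coeff q v (nat \<bar>k\<bar>) m'))"

context qbase
begin

lemma fibre_coeff_sum: "(\<Sum>(a, b)\<in>{..N} \<times> {..N}. fibre_coeff q N a b) = 1 / qfact q N"
proof -
  have split: "fibre_coeff q N a b = (-1) ^ a * q ^ (Suc a choose 2) / (qfact q a * qfact q (N - a))
      * ((-1) ^ b * qbinom q N b * q ^ (Suc b choose 2) / q ^ (a * b)) / qfact q N" if "b \<le> N" for a b
    using that qfact_pos[of N] by (simp add: fibre_coeff_def qbinom_def power_add field_simps)
  have "(\<Sum>(a, b)\<in>{..N} \<times> {..N}. fibre_coeff q N a b)
      = (\<Sum>a\<le>N. (-1) ^ a * q ^ (Suc a choose 2) / (qfact q a * qfact q (N - a))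
          * (\<Sum>b\<le>N. (-1) ^ b * qbinom q N b * q ^ (Suc b choose 2) / q ^ (a * b)) / qfact q N)"
    by (simp add: sum.cartesian_product[symmetric] split sum_distrib_left sum_divide_distrib)
  also have "\<dots> = (\<Sum>a\<le>N. if a = 0 then 1 / qfact q N else 0)"
    using qfact_pos[of N] by (intro sum.cong) (auto simp: qbinom_alternating_sum binomial_eq_0)
  also have "\<dots> = 1 / qfact q N"
    by (simp add: sum.delta)
  finally show ?thesis .
qed

lemma jackson_coeff_product_eq_degree_term:
  assumes N: "N = n + m + m'"
    and denominators: "qfact q m * qfact q (n + m) * (qfact q m' * qfact q (n + m'))
      = qfact q a * qfact q (N - a) * qfact q b * qfact q (N - b)"
    and sign: "(-1::real) ^ (a + b) = (-1) ^ m * (-1) ^ m'"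
    and exponent: "E + (m * m + m * n) + (m' * m' + m' * n) + a * b
      = (N choose 2) + ((Suc a choose 2) + (Suc b choose 2))"
  shows "of_real (q ^ E) * v ^ (2 * n) * (jackson_coeff q v n m * jackson_coeff q v n m')
    = degree_term q v (N, a, b)"
proof -
  have regroup: "A * (s1 * B / P) * (s2 * C / P') = X * (s * Y / (D * (P * P')))"
    if "D > 0" "P > 0" "P' > 0" "A * B * C * D = X * Y" "s = s1 * s2"
    for A B C D X Y P P' s s1 s2 :: real
  proof -
    have "X * (s * Y / (D * (P * P'))) = s * (A * B * C * D) / (D * (P * P'))"
      using that(4) by (simp add: field_simps)
    then show ?thesis
      using that by (simp add: field_simps)
  qed
  have powers: "q ^ E * q ^ (m * m + m * n) * q ^ (m' * m' + m' * n) * q ^ (a * b)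
      = q ^ (N choose 2) * q ^ ((Suc a choose 2) + (Suc b choose 2))"
    by (simp only: power_add[symmetric] exponent)
  have coefficients: "q ^ E * ((-1) ^ m * q ^ (m * m + m * n) / (qfact q m * qfact q (n + m)))
      * ((-1) ^ m' * q ^ (m' * m' + m' * n) / (qfact q m' * qfact q (n + m')))
    = q ^ (N choose 2) * fibre_coeff q N a b"
    unfolding fibre_coeff_def denominators[symmetric] using q_pos qfact_pos
    by (intro regroup powers sign) (auto simp: mult.assoc)
  have "of_real (q ^ E) * v ^ (2 * n) * (jackson_coeff q v n m * jackson_coeff q v n m')
      = of_real (q ^ E * ((-1) ^ m * q ^ (m * m + m * n) / (qfact q m * qfact q (n + m)))
          * ((-1) ^ m' * q ^ (m' * m' + m' * n) / (qfact q m' * qfact q (n + m'))))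
        * (v ^ (2 * n) * (v ^ (2 * m) * v ^ (2 * m')))"
    unfolding jackson_coeff_def of_real_mult by (simp only: mult_ac)
  also have "v ^ (2 * n) * (v ^ (2 * m) * v ^ (2 * m')) = v ^ (2 * N)"
    unfolding N by (simp add: power_add[symmetric] algebra_simps)
  finally show ?thesis
    unfolding coefficients by (simp add: degree_term_def)
qed

lemma product_term_eq_degree_term: "product_term q v x = degree_term q v (to_degree x)"
proof -
  obtain k m m' where x: "x = (k, m, m')"
    by (cases x)
  show ?thesis
  proof (cases "k \<ge> 0")
    case True
    then obtain n where k: "k = int n"
      by (metis nonneg_int_cases)
    have "of_real (q ^ (n choose 2)) * v ^ (2 * n) * (jackson_coeff q v n m * jackson_coeff q v n m')
        = degree_term q v (n + m + m', m, m')"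
      by (rule jackson_coeff_product_eq_degree_term[OF refl _ _ choose_two_exponent_nonneg])
        (simp_all add: power_add add.commute add.left_commute mult_ac)
    then show ?thesis
      by (simp add: x k product_term_def to_degree_def int_choose_two_of_nat add.commute add.left_commute)
  next
    case False
    then obtain n where k: "k = - int n" and "n > 0"
      by (metis neg_int_cases linorder_not_le of_nat_0_less_iff zero_less_Suc)
    have "of_real (q ^ (Suc n choose 2)) * v ^ (2 * n) * (jackson_coeff q v n m * jackson_coeff q v n m')
        = degree_term q v (n + m + m', m + n, m' + n)"
      by (rule jackson_coeff_product_eq_degree_term[OF refl _ _ choose_two_exponent_neg])
        (simp_all add: power_add add.commute add.left_commute mult_ac)
    then show ?thesis
      using \<open>n > 0\<close> by (simp add: x k product_term_def to_degree_def int_choose_two_minus add.commute add.left_commute)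
  qed
qed

lemma abs_fibre_coeff_le:
  assumes "a \<le> N" "b \<le> N"
  shows "\<bar>fibre_coeff q N a b\<bar> \<le> 1 / (1 - q) ^ (2 * N)"
proof -
  have pos: "qfact q a > 0" "qfact q b > 0" "qfact q (N - a) > 0" "qfact q (N - b) > 0" "q ^ (a * b) > 0"
    using qfact_pos q_pos by auto
  have qfact_pair_ge: "(1 - q) ^ N \<le> qfact q c * qfact q (N - c)" if "c \<le> N" for c
  proof -
    have "(1 - q) ^ N = (1 - q) ^ c * (1 - q) ^ (N - c)"
      using that by (simp flip: power_add)
    also have "\<dots> \<le> qfact q c * qfact q (N - c)"
      using qfact_ge q_less_1 by (intro mult_mono) (auto intro: less_imp_le qfact_pos)
    finally show ?thesis .
  qed
  have "(1 - q) ^ N * (1 - q) ^ N \<le> (qfact q a * qfact q (N - a)) * (qfact q b * qfact q (N - b))"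
    using assms pos q_less_1 by (intro mult_mono qfact_pair_ge) auto
  then have denominator: "q ^ (a * b) * ((1 - q) ^ N * (1 - q) ^ N)
      \<le> q ^ (a * b) * (qfact q a * qfact q (N - a) * qfact q b * qfact q (N - b))"
    using pos by (simp add: mult.assoc)
  have numerator: "q ^ ((Suc a choose 2) + (Suc b choose 2)) \<le> q ^ (a * b)"
    using q_pos q_less_1 mult_le_Suc_choose_two_add by (intro power_decreasing) auto
  have "\<bar>fibre_coeff q N a b\<bar> = q ^ ((Suc a choose 2) + (Suc b choose 2))
      / (q ^ (a * b) * (qfact q a * qfact q (N - a) * qfact q b * qfact q (N - b)))"
    unfolding fibre_coeff_def using pos q_pos by (simp add: abs_mult)
  also have "\<dots> \<le> q ^ (a * b) / (q ^ (a * b) * ((1 - q) ^ N * (1 - q) ^ N))"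
    using numerator denominator pos q_less_1 by (intro frac_le) auto
  also have "\<dots> = 1 / (1 - q) ^ (2 * N)"
    using pos q_pos q_less_1 by (simp add: power_mult_distrib mult_2 power_add)
  finally show ?thesis .
qed

lemma norm_degree_term_le:
  assumes "a \<le> N" "b \<le> N"
  shows "norm (degree_term q v (N, a, b)) \<le> q ^ (N choose 2) * ((norm v)\<^sup>2 / (1 - q)\<^sup>2) ^ N"
proof -
  have "norm (degree_term q v (N, a, b)) = q ^ (N choose 2) * \<bar>fibre_coeff q N a b\<bar> * norm v ^ (2 * N)"
    unfolding degree_term_def using q_pos by (simp add: norm_mult norm_power abs_mult)
  also have "\<dots> \<le> q ^ (N choose 2) * (1 / (1 - q) ^ (2 * N)) * norm v ^ (2 * N)"
    using abs_fibre_coeff_le[OF assms] q_pos by (intro mult_right_mono mult_left_mono) auto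
  also have "\<dots> = q ^ (N choose 2) * ((norm v)\<^sup>2 / (1 - q)\<^sup>2) ^ N"
    by (simp add: power_mult power_divide)
  finally show ?thesis .
qed

lemma degree_term_summable_on: "degree_term q v summable_on degree_triples"
proof -
  define c where "c = (norm v)\<^sup>2 / (1 - q)\<^sup>2"
  have c_nonneg: "c \<ge> 0"
    by (simp add: c_def)
  define G where "G N = q ^ (N choose 2) * c ^ N" for N
  have G_nonneg: "G N \<ge> 0" for N
    using q_pos c_nonneg by (simp add: G_def)
  have square_le: "real ((Suc N)\<^sup>2) \<le> 4 ^ N" for N
  proof -
    have "Suc N \<le> 2 ^ N"
      by (rule Suc_leI) (rule less_exp)
    then have "(Suc N)\<^sup>2 \<le> (2 ^ N)\<^sup>2"
      by (rule power_mono) simp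
    also have "\<dots> = 4 ^ N"
      by (simp flip: power_mult power_mult_distrib add: mult.commute power2_eq_square)
    finally show ?thesis
      by (metis of_nat_le_iff of_nat_numeral of_nat_power)
  qed
  have "summable (\<lambda>N. q ^ (N choose 2) * (4 * c) ^ N)"
    using c_nonneg by (intro summable_qpower_choose_two) simp
  then have "summable (\<lambda>N. norm (real ((Suc N)\<^sup>2) * G N))"
    by (rule summable_comparison_test[rotated])
      (use square_le G_nonneg q_pos c_nonneg in \<open>auto simp: G_def power_mult_distrib mult_ac
        intro!: mult_right_mono mult_left_mono\<close>)
  then have "(\<lambda>N. real ((Suc N)\<^sup>2) * G N) summable_on UNIV"
    by (rule norm_summable_imp_summable_on)
  then have "(\<lambda>(N, p). G N) summable_on degree_triples"
    unfolding degree_triples_def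
    by (rule summable_on_SigmaI[rotated])
      (auto intro!: has_sum_finiteI simp: power2_eq_square G_nonneg)
  then have "(\<lambda>x. norm ((\<lambda>(N, p). G N) x)) summable_on degree_triples"
    by (rule summable_on_cong[THEN iffD1, rotated]) (use G_nonneg in auto)
  then have "(\<lambda>x. norm (degree_term q v x)) summable_on degree_triples"
    by (rule Infinite_Sum.abs_summable_on_comparison_test)
      (use norm_degree_term_le G_nonneg in \<open>auto simp: degree_triples_def G_def c_def\<close>)
  then show ?thesis
    by (rule abs_summable_summable)
qed

lemma degree_term_fibre_has_sum:
  "((\<lambda>p. degree_term q v (N, p)) has_sum of_real (q ^ (N choose 2) / qfact q N) * v ^ (2 * N))
    ({..N} \<times> {..N})"
proof (rule has_sum_finiteI)
  have "(\<Sum>p\<in>{..N} \<times> {..N}. degree_term q v (N, p))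
      = of_real (q ^ (N choose 2)) * v ^ (2 * N) * of_real (\<Sum>(a, b)\<in>{..N} \<times> {..N}. fibre_coeff q N a b)"
    unfolding of_real_sum sum_distrib_left by (intro sum.cong) (auto simp: degree_term_def)
  then show "of_real (q ^ (N choose 2) / qfact q N) * v ^ (2 * N)
      = (\<Sum>p\<in>{..N} \<times> {..N}. degree_term q v (N, p))"
    by (simp add: fibre_coeff_sum)
qed simp

lemma product_term_fibre_has_sum:
  "((\<lambda>p. product_term q v (k, p)) has_sum of_real (q ^ int_choose_two k) * (jackson2 (nat \<bar>k\<bar>) (2 * v) q)\<^sup>2)
    UNIV"
proof -
  define n where "n = nat \<bar>k\<bar>"
  have "((\<lambda>(m, m'). jackson_coeff q v n m * jackson_coeff q v n m')
      has_sum (\<Sum>m. jackson_coeff q v n m) * (\<Sum>m. jackson_coeff q v n m)) UNIV"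
    by (intro has_sum_product_of_summable_norm summable_norm_jackson_coeff)
  from has_sum_cmult_right[OF this, of "of_real (q ^ int_choose_two k) * v ^ (2 * n)"]
  show ?thesis
    unfolding n_def jackson2_double_series
    by (simp add: product_term_def case_prod_beta power_mult_distrib power_mult power2_eq_square mult_ac)
qed

theorem jackson2_squares_has_sum:
  "((\<lambda>k. of_real (q ^ int_choose_two k) * (jackson2 (nat \<bar>k\<bar>) (2 * v) q)\<^sup>2) has_sum qpoch_inf (- v\<^sup>2) q)
    UNIV"
proof -
  define S where "S = (\<Sum>\<^sub>\<infinity>x\<in>degree_triples. degree_term q v x)"
  have degree_sum: "(degree_term q v has_sum S) degree_triples"
    unfolding S_def using degree_term_summable_on by (rule has_sum_infsum)
  have "(product_term q v has_sum S) UNIV"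
    using degree_sum
    by (intro has_sum_reindex_bij_witness[where i = from_degree and j = to_degree, THEN iffD2])
      (auto simp: from_degree_to_degree to_degree_from_degree to_degree_in_degree_triples
        product_term_eq_degree_term)
  then have "((\<lambda>k. of_real (q ^ int_choose_two k) * (jackson2 (nat \<bar>k\<bar>) (2 * v) q)\<^sup>2) has_sum S) UNIV"
    by (rule has_sum_SigmaD[where A = UNIV and B = "\<lambda>_. UNIV", simplified])
      (use product_term_fibre_has_sum in auto)
  moreover have "(\<lambda>N. of_real (q ^ (N choose 2) / qfact q N) * v ^ (2 * N)) sums S"
    using has_sum_SigmaD[OF degree_sum[unfolded degree_triples_def] degree_term_fibre_has_sum]
    by (rule has_sum_imp_sums)
  then have "S = qpoch_inf (- v\<^sup>2) q"
    using qpoch_inf_minus_sums[of "v\<^sup>2"] unfolding power_mult by (rule sums_unique2)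
  ultimately show ?thesis
    by simp
qed

end

section \<open>The normalised functions\<close>

context qbase
begin

lemma power_int_choose_two: "q ^ int_choose_two k = q powr (real_of_int k ^ 2 / 2 - real_of_int k / 2)"
  using q_pos by (simp add: powr_realpow[symmetric] real_int_choose_two diff_divide_distrib)

lemma jfrak_double_square:
  "(jfrak k (2 * w) q)\<^sup>2
    = of_real (q powr (real_of_int k ^ 2 / 2)) * (jackson2 (nat \<bar>k\<bar>) (2 * (of_real (q powr (1/4)) * w)) q)\<^sup>2"
proof -
  have argument: "complex_of_real (q powr (1/4)) * (2 * w) = 2 * (of_real (q powr (1/4)) * w)"
    by simp
  have square: "(q powr (x / 4))\<^sup>2 = q powr (x / 2)" for x
    by (simp add: power2_eq_square powr_add[symmetric])
  show ?thesis
  proof (cases "k \<ge> 0")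
    case True
    then show ?thesis
      unfolding jfrak_def argument using square[of "real_of_int k ^ 2"]
      by (simp add: power_mult_distrib flip: of_real_power)
  next
    case False
    then show ?thesis
      unfolding jfrak_def argument using square[of "real_of_int k ^ 2"]
      by (simp add: power_mult_distrib flip: of_real_power power_mult)
  qed
qed

lemma jfrak_weighted_has_sum:
  "((\<lambda>k. of_real (q powr (- real_of_int k / 2)) * (jfrak k (2 * w) q)\<^sup>2)
    has_sum qpoch_inf (- of_real (q powr (1/2)) * w\<^sup>2) q) UNIV"
proof -
  have "(q powr (1/4))\<^sup>2 = q powr (1/2)"
    by (simp add: power2_eq_square powr_add[symmetric])
  then have "(complex_of_real (q powr (1/4)) * w)\<^sup>2 = of_real (q powr (1/2)) * w\<^sup>2"
    by (simp add: power_mult_distrib flip: of_real_power)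
  moreover have "of_real (q powr (- real_of_int k / 2)) * (jfrak k (2 * w) q)\<^sup>2
      = of_real (q ^ int_choose_two k)
        * (jackson2 (nat \<bar>k\<bar>) (2 * (of_real (q powr (1/4)) * w)) q)\<^sup>2" for k
    unfolding jfrak_double_square power_int_choose_two
    by (simp add: powr_add[symmetric] mult.assoc flip: of_real_mult)
  ultimately show ?thesis
    using jackson2_squares_has_sum[of "of_real (q powr (1/4)) * w"] by simp
qed

lemma jfrak_weighted_sums:
  "(\<lambda>k. of_real (q powr (real (Suc k) / 2) + q powr (- real (Suc k) / 2)) * (jfrak (int (Suc k)) (2 * w) q)\<^sup>2)
    sums (qpoch_inf (- of_real (q powr (1/2)) * w\<^sup>2) q - (jfrak 0 (2 * w) q)\<^sup>2)"
proof -
  define f where "f k = of_real (q powr (- real_of_int k / 2)) * (jfrak k (2 * w) q)\<^sup>2" for k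
  have symmetric: "(jfrak (- int n) (2 * w) q)\<^sup>2 = (jfrak (int n) (2 * w) q)\<^sup>2" for n
    unfolding jfrak_double_square by simp
  have pair: "f (int (Suc n)) + f (- int (Suc n))
      = of_real (q powr (real (Suc n) / 2) + q powr (- real (Suc n) / 2)) * (jfrak (int (Suc n)) (2 * w) q)\<^sup>2" for n
    unfolding f_def symmetric by (simp add: algebra_simps)
  have f0: "f 0 = (jfrak 0 (2 * w) q)\<^sup>2"
    using q_pos by (simp add: f_def)
  have "(f has_sum qpoch_inf (- of_real (q powr (1/2)) * w\<^sup>2) q) UNIV"
    unfolding f_def by (rule jfrak_weighted_has_sum)
  from has_sum_int_imp_sums_symmetric[OF this] show ?thesis
    unfolding pair f0 .
qed

lemma jackson2_weighted_sums:
  "(\<lambda>k. of_real ((q powr (real (Suc k) / 2) + q powr (- real (Suc k) / 2)) * q powr (real (Suc k) ^ 2 / 2))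
      * (jackson2 (Suc k) (2 * w) q)\<^sup>2)
    sums (qpoch_inf (- (w\<^sup>2)) q - (jackson2 0 (2 * w) q)\<^sup>2)"
proof -
  define g where "g k = of_real (q ^ int_choose_two k) * (jackson2 (nat \<bar>k\<bar>) (2 * w) q)\<^sup>2" for k
  have "q ^ int_choose_two (int n) = q powr (- real n / 2) * q powr (real n ^ 2 / 2)"
    and "q ^ int_choose_two (- int n) = q powr (real n / 2) * q powr (real n ^ 2 / 2)" for n
    unfolding power_int_choose_two powr_add[symmetric]
    by (simp_all add: field_simps power2_eq_square)
  then have pair: "g (int (Suc n)) + g (- int (Suc n))
      = of_real ((q powr (real (Suc n) / 2) + q powr (- real (Suc n) / 2)) * q powr (real (Suc n) ^ 2 / 2))
        * (jackson2 (Suc n) (2 * w) q)\<^sup>2" for n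
    unfolding g_def by (simp add: algebra_simps del: of_nat_Suc)
  have g0: "g 0 = (jackson2 0 (2 * w) q)\<^sup>2"
    by (simp add: g_def int_choose_two_def)
  have "(g has_sum qpoch_inf (- (w\<^sup>2)) q) UNIV"
    unfolding g_def by (rule jackson2_squares_has_sum)
  from has_sum_int_imp_sums_symmetric[OF this] show ?thesis
    unfolding pair g0 .
qed

end

theorem mainTheorem10:
  fixes q :: real and w :: complex
  assumes "0 < q" and "q < 1"
  shows "((\<lambda>k::int. complex_of_real (q powr (- real_of_int k / 2)) * (jfrak k (2 * w) q)\<^sup>2)
            has_sum qpoch_inf (- complex_of_real (q powr (1/2)) * w\<^sup>2) q) UNIV
       \<and> (jfrak 0 (2 * w) q)\<^sup>2
           + (\<Sum>k. complex_of_real (q powr (real (Suc k) / 2) + q powr (- real (Suc k) / 2))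
                    * (jfrak (int (Suc k)) (2 * w) q)\<^sup>2)
         = qpoch_inf (- complex_of_real (q powr (1/2)) * w\<^sup>2) q
       \<and> (\<lambda>k. complex_of_real (q powr (real (Suc k) / 2) + q powr (- real (Suc k) / 2))
                    * (jfrak (int (Suc k)) (2 * w) q)\<^sup>2)
           sums (qpoch_inf (- complex_of_real (q powr (1/2)) * w\<^sup>2) q - (jfrak 0 (2 * w) q)\<^sup>2)
       \<and> (jackson2 0 (2 * w) q)\<^sup>2
           + (\<Sum>k. complex_of_real ((q powr (real (Suc k) / 2) + q powr (- real (Suc k) / 2))
                                     * q powr (real (Suc k) ^ 2 / 2))
                    * (jackson2 (Suc k) (2 * w) q)\<^sup>2)
         = qpoch_inf (- (w\<^sup>2)) q"
proof -
  interpret qbase q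
    using assms by unfold_locales
  show ?thesis
    using jfrak_weighted_has_sum jfrak_weighted_sums
      sums_unique[OF jfrak_weighted_sums, symmetric] sums_unique[OF jackson2_weighted_sums, symmetric]
    by simp
qed

end
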